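(* Let $n\ge1$, $N_b\ge0$ with $2N_b+1\le n$, and $p\in[0,1]$. For the golf process on $\mathbb{Z}/n\mathbb{Z}$ under $\mathbb{P}^{n,N_b,N_b+1,p}$, for every $x\in\mathbb{Z}/n\mathbb{Z}$, $$\mathbb{P}^{n,N_b,N_b+1,p}(H^1=\{x\})=\frac1n\quad\text{and}\quad\mathbb{P}^{n,N_b,N_b+1,p}(H^1=\{x\}\mid x\in H^0)=\frac{1}{N_b+1}.$$
   Context: Golf process on $\mathbb{Z}/n\mathbb{Z}$ under $\mathbb{P}^{n,N_b,N_h,p}$: initial configuration uniform among assignments of states with exactly $N_b$ balls and $N_h$ holes (set $H^0$), the rest neutral; clocks i.i.d. uniform on $[0,1]$; at its clock time each ball performs an independent random walk (step $+1$ w.p. $p$, $-1$ w.p. $1-p$) stopped at the first not-yet-filled hole, which it fills. $H^1$ is the set of holes never filled. *)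

theory Defs
  imports "HOL-Probability.Probability"
begin

text \<open>Golf process on Z/nZ, sites represented by 0..<n.\<close>

datatype site_state = Ball | Hole | Neutral

definition golf_configs :: "nat \<Rightarrow> nat \<Rightarrow> nat \<Rightarrow> (nat \<Rightarrow> site_state) set" where
  "golf_configs n Nb Nh = {c. (\<forall>y. n \<le> y \<longrightarrow> c y = Neutral)
      \<and> card {y. y < n \<and> c y = Ball} = Nb \<and> card {y. y < n \<and> c y = Hole} = Nh}"

definition walk_pos :: "nat \<Rightarrow> nat \<Rightarrow> bool stream \<Rightarrow> nat \<Rightarrow> nat" where
  "walk_pos n x s k = nat ((int x + (\<Sum>i<k. if s !! i then 1 else -1)) mod int n)"

text \<open>Hole hit by the walk: first visited site in the set U of not-yet-filled holes
  (None if never hit, a null event).\<close>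
definition walk_hit :: "nat \<Rightarrow> nat \<Rightarrow> bool stream \<Rightarrow> nat set \<Rightarrow> nat option" where
  "walk_hit n x s U = (if \<exists>k. walk_pos n x s k \<in> U
      then Some (walk_pos n x s (LEAST k. walk_pos n x s k \<in> U)) else None)"

type_synonym golf_outcome = "(nat \<Rightarrow> site_state) \<times> (nat \<Rightarrow> real \<times> bool stream)"

text \<open>Probability space: uniform initial configuration, and independently for each site
  a clock uniform on [0,1] and a Bernoulli(p) step stream (used by the ball at that site).\<close>
definition golf_space :: "nat \<Rightarrow> nat \<Rightarrow> nat \<Rightarrow> real \<Rightarrow> golf_outcome measure" where
  "golf_space n Nb Nh p =
     measure_pmf (pmf_of_set (golf_configs n Nb Nh)) \<Otimes>\<^sub>M
     (\<Pi>\<^sub>M y\<in>{..<n}. uniform_measure lborel {0..1::real} \<Otimes>\<^sub>M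
                     stream_space (measure_pmf (bernoulli_pmf p)))"

definition golf_H0 :: "nat \<Rightarrow> golf_outcome \<Rightarrow> nat set" where
  "golf_H0 n \<omega> = {y. y < n \<and> fst \<omega> y = Hole}"

definition golf_balls :: "nat \<Rightarrow> golf_outcome \<Rightarrow> nat set" where
  "golf_balls n \<omega> = {y. y < n \<and> fst \<omega> y = Ball}"

text \<open>Balls ordered by increasing clock (ties, a null event, broken by site index).\<close>
definition golf_order :: "nat \<Rightarrow> golf_outcome \<Rightarrow> nat list" where
  "golf_order n \<omega> = sort_key (\<lambda>y. fst (snd \<omega> y)) (sorted_list_of_set (golf_balls n \<omega>))"

definition golf_step :: "nat \<Rightarrow> golf_outcome \<Rightarrow> nat \<Rightarrow> nat set \<Rightarrow> nat set" where
  "golf_step n \<omega> y U = (case walk_hit n y (snd (snd \<omega> y)) U of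
      Some h \<Rightarrow> U - {h} | None \<Rightarrow> U)"

definition golf_H1 :: "nat \<Rightarrow> golf_outcome \<Rightarrow> nat set" where
  "golf_H1 n \<omega> = fold (golf_step n \<omega>) (golf_order n \<omega>) (golf_H0 n \<omega>)"

definition golf_prob :: "nat \<Rightarrow> nat \<Rightarrow> nat \<Rightarrow> real \<Rightarrow> golf_outcome set \<Rightarrow> real" where
  "golf_prob n Nb Nh p A = measure (golf_space n Nb Nh p) (A \<inter> space (golf_space n Nb Nh p))"

definition golf_cond_prob :: "nat \<Rightarrow> nat \<Rightarrow> nat \<Rightarrow> real \<Rightarrow> golf_outcome set \<Rightarrow> golf_outcome set \<Rightarrow> real" where
  "golf_cond_prob n Nb Nh p A B = golf_prob n Nb Nh p (A \<inter> B) / golf_prob n Nb Nh p B"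

end

theory Submission
  imports Defs
begin

(* Rotating the cycle by one site, each site carrying its clock and its step stream along,
  preserves the law of the process. It always rotates H^0, and it rotates H^1 as soon as the
  clocks are pairwise distinct, so P(H^1 = {x}) and P(x \<in> H^0) do not depend on x.
  Almost surely every walk eventually makes n equal steps in a row and therefore visits every
  site, so each of the N_b balls fills exactly one hole and H^1 is a singleton: summing over x
  gives P(H^1 = {x}) = 1/n. Summing P(x \<in> H^0) over x gives the number N_b + 1 of holes, and
  since H^1 \<subseteq> H^0 the conditional probability is (1/n) / ((N_b + 1)/n). *)

section \<open>Rotation of the cycle\<close>

definition rot :: "nat \<Rightarrow> nat \<Rightarrow> nat" where
  "rot n y = Suc y mod n"

definition rot_inv :: "nat \<Rightarrow> nat \<Rightarrow> nat" where
  "rot_inv n y = (y + n - 1) mod n"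

lemma rot_less: "1 \<le> n \<Longrightarrow> rot n y < n"
  by (simp add: rot_def)

lemma rot_inv_less: "1 \<le> n \<Longrightarrow> rot_inv n y < n"
  by (simp add: rot_inv_def)

lemma rot_rot_inv: "y < n \<Longrightarrow> rot n (rot_inv n y) = y"
  by (cases y) (auto simp: rot_def rot_inv_def mod_Suc_eq)

lemma rot_inv_rot: "y < n \<Longrightarrow> rot_inv n (rot n y) = y"
  by (cases "Suc y = n") (auto simp: rot_def rot_inv_def)

lemma inj_on_rot: "inj_on (rot n) {..<n}"
  by (metis inj_on_inverseI lessThan_iff rot_inv_rot)

lemma inj_on_rot_inv: "inj_on (rot_inv n) {..<n}"
  by (metis inj_on_inverseI lessThan_iff rot_rot_inv)

lemma rot_image_Collect:
  assumes "1 \<le> n"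
  shows "rot n ` {y. y < n \<and> P y} = {z. z < n \<and> P (rot_inv n z)}"
proof
  show "{z. z < n \<and> P (rot_inv n z)} \<subseteq> rot n ` {y. y < n \<and> P y}"
    using assms by (auto simp: rot_rot_inv rot_inv_less intro!: image_eqI[of _ _ "rot_inv n _"])
qed (use assms in \<open>auto simp: rot_less rot_inv_rot\<close>)

lemma rotation_invariant_eq_mean:
  fixes f :: "nat \<Rightarrow> real"
  assumes n: "1 \<le> n" and inv: "\<And>y. y < n \<Longrightarrow> f (rot n y) = f y" and x: "x < n"
  shows "f x = (\<Sum>y<n. f y) / n"
proof -
  have "f (k mod n) = f 0" for k
  proof (induction k)
    case (Suc k)
    have "f (Suc k mod n) = f (rot n (k mod n))"
      by (simp add: rot_def mod_Suc_eq)
    also have "\<dots> = f (k mod n)"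
      using n by (intro inv) simp
    finally show ?case
      using Suc by simp
  qed simp
  then have const: "f y = f 0" if "y < n" for y
    using that by (metis mod_less)
  have "(\<Sum>y<n. f y) = (\<Sum>y<n. f 0)"
    by (intro sum.cong) (auto intro: const)
  then show ?thesis
    using n by (simp add: const[OF x])
qed

section \<open>Walks and the golf dynamics\<close>

lemma walk_pos_less: "1 \<le> n \<Longrightarrow> walk_pos n y s k < n"
  unfolding walk_pos_def by (simp add: nat_less_iff)

lemma walk_pos_rot:
  assumes n: "1 \<le> n"
  shows "walk_pos n (rot n y) s k = rot n (walk_pos n y s k)"
proof -
  define S :: int where "S = (\<Sum>i<k. if s !! i then 1 else -1)"
  have "walk_pos n (rot n y) s k = nat ((int (Suc y mod n) + S) mod int n)"
    unfolding walk_pos_def S_def rot_def ..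
  also have "int (Suc y mod n) = (int y + 1) mod int n"
    by (simp add: zmod_int add.commute)
  also have "((int y + 1) mod int n + S) mod int n = ((int y + S) mod int n + 1) mod int n"
    by (simp add: mod_add_left_eq mod_add_right_eq algebra_simps)
  also have "nat (((int y + S) mod int n + 1) mod int n) = Suc (nat ((int y + S) mod int n)) mod n"
    using n by (simp add: nat_mod_distrib nat_add_distrib)
  finally show ?thesis
    by (simp only: rot_def walk_pos_def S_def)
qed

lemma walk_hit_rot:
  assumes n: "1 \<le> n" and U: "U \<subseteq> {..<n}"
  shows "walk_hit n (rot n y) s (rot n ` U) = map_option (rot n) (walk_hit n y s U)"
proof -
  have "rot n (walk_pos n y s k) \<in> rot n ` U \<longleftrightarrow> walk_pos n y s k \<in> U" for k
    by (rule inj_on_image_mem_iff[OF inj_on_rot]) (use walk_pos_less[OF n] U in auto)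
  then show ?thesis
    by (simp add: walk_hit_def walk_pos_rot[OF n])
qed

lemma walk_hit_mem: "walk_hit n y s U = Some h \<Longrightarrow> h \<in> U"
  unfolding walk_hit_def by (auto split: if_splits intro: LeastI_ex)

lemma walk_hit_eq_SomeI:
  assumes "walk_pos n y s k \<in> U"
  shows "\<exists>h. walk_hit n y s U = Some h"
  using assms unfolding walk_hit_def by auto

lemma walk_pos_surj_of_run:
  assumes n: "1 \<le> n" and run: "\<forall>i<n. s !! (j + i) = b" and z: "z < n"
  shows "\<exists>k. walk_pos n y s k = z"
proof -
  define d :: int where "d = (if b then 1 else -1)"
  define S where "S m = (\<Sum>i<m. if s !! i then 1 else -1 :: int)" for m
  have S_run: "i \<le> n \<Longrightarrow> S (j + i) = S j + int i * d" for i
  proof (induction i)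
    case (Suc i)
    then have "s !! (j + i) = b"
      using run by simp
    with Suc show ?case
      by (simp add: S_def d_def algebra_simps)
  qed simp
  define a where "a = int y + S j"
  txt \<open>Since d * d = 1, after i = d (z - a) mod n steps of the run the walk is at z.\<close>
  define i where "i = nat ((d * (int z - a)) mod int n)"
  have i: "i < n" "int i = (d * (int z - a)) mod int n"
    using n by (simp_all add: i_def nat_less_iff)
  have "int i * d mod int n = (d * (int z - a) * d) mod int n"
    unfolding i(2) by (rule mod_mult_left_eq)
  also have "d * (int z - a) * d = int z - a"
    by (simp add: d_def)
  finally have "(a + int i * d) mod int n = (a + (int z - a)) mod int n"
    by (metis mod_add_right_eq)
  then have "(a + int i * d) mod int n = int z"
    using z by simp
  then have "walk_pos n y s (j + i) = z"
    using i by (simp add: walk_pos_def S_run a_def add.assoc flip: S_def)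
  then show ?thesis ..
qed

lemma golf_balls_subset: "golf_balls n \<omega> \<subseteq> {..<n}"
  by (auto simp: golf_balls_def)

lemma golf_H0_subset: "golf_H0 n \<omega> \<subseteq> {..<n}"
  by (auto simp: golf_H0_def)

lemma finite_golf_balls: "finite (golf_balls n \<omega>)"
  using golf_balls_subset by (rule finite_subset) simp

lemma set_golf_order: "set (golf_order n \<omega>) = golf_balls n \<omega>"
  by (simp add: golf_order_def finite_golf_balls)

lemma golf_step_subset: "golf_step n \<omega> y U \<subseteq> U"
  by (auto simp: golf_step_def split: option.split)

lemma fold_golf_step_subset: "fold (golf_step n \<omega>) L U \<subseteq> U"
  by (induction L arbitrary: U) (auto dest: subsetD[OF golf_step_subset])

lemma golf_H1_subset_H0: "golf_H1 n \<omega> \<subseteq> golf_H0 n \<omega>"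
  unfolding golf_H1_def by (rule fold_golf_step_subset)

lemma card_fold_golf_step:
  assumes "\<And>y U. y \<in> set L \<Longrightarrow> U \<noteq> {} \<Longrightarrow> U \<subseteq> {..<n} \<Longrightarrow> \<exists>h\<in>U. golf_step n \<omega> y U = U - {h}"
    and "U \<subseteq> {..<n}" "length L \<le> card U"
  shows "card (fold (golf_step n \<omega>) L U) = card U - length L"
  using assms
proof (induction L arbitrary: U)
  case (Cons a L)
  have fin: "finite U"
    using Cons.prems(2) finite_subset by blast
  have "U \<noteq> {}"
    using Cons.prems(3) by auto
  then obtain h where h: "h \<in> U" "golf_step n \<omega> a U = U - {h}"
    using Cons.prems(1,2) by (metis list.set_intros(1))
  have "card (fold (golf_step n \<omega>) L (U - {h})) = card (U - {h}) - length L"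
    using Cons.prems fin h by (intro Cons.IH) auto
  then show ?case
    using h fin by simp
qed simp

lemma card_golf_H1:
  assumes c: "fst \<omega> \<in> golf_configs n Nb Nh" and "Nb \<le> Nh"
    and visit: "\<forall>y<n. \<forall>z<n. \<exists>k. walk_pos n y (snd (snd \<omega> y)) k = z"
  shows "card (golf_H1 n \<omega>) = Nh - Nb"
proof -
  have card: "card (golf_balls n \<omega>) = Nb" "card (golf_H0 n \<omega>) = Nh"
    using c by (auto simp: golf_configs_def golf_balls_def golf_H0_def)
  have "\<exists>h\<in>U. golf_step n \<omega> y U = U - {h}"
    if y: "y \<in> set (golf_order n \<omega>)" and U: "U \<noteq> {}" "U \<subseteq> {..<n}" for y U
  proof -
    obtain z where "z \<in> U"
      using U by auto
    moreover have "y < n"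
      using y golf_balls_subset set_golf_order by blast
    ultimately obtain k where "walk_pos n y (snd (snd \<omega> y)) k \<in> U"
      using visit U by blast
    then obtain h where h: "walk_hit n y (snd (snd \<omega> y)) U = Some h"
      using walk_hit_eq_SomeI by blast
    then have "h \<in> U"
      by (rule walk_hit_mem)
    with h show ?thesis
      by (auto simp: golf_step_def)
  qed
  moreover have "length (golf_order n \<omega>) = Nb"
    using card by (simp add: golf_order_def finite_golf_balls)
  ultimately show ?thesis
    unfolding golf_H1_def using card \<open>Nb \<le> Nh\<close> golf_H0_subset
    by (subst card_fold_golf_step) auto
qed

lemma sort_key_sorted_list_of_set_image:
  assumes B: "finite B" and g: "inj_on g B" and f: "inj_on f B"
    and f': "\<And>y. y \<in> B \<Longrightarrow> f' (g y) = f y"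
  shows "sort_key f' (sorted_list_of_set (g ` B)) = map g (sort_key f (sorted_list_of_set B))"
    (is "?L = ?R")
proof -
  have f'_inj: "inj_on f' (g ` B)"
    using f f' by (auto simp: inj_on_def)
  have set: "set ?L = g ` B" "set ?R = g ` B"
    using B by simp_all
  have "map f' ?L = map f' ?R"
  proof (rule sorted_distinct_set_unique)
    have "map f' ?R = map f (sort_key f (sorted_list_of_set B))"
      using B f' by simp
    then show "sorted (map f' ?R)"
      by (metis sorted_sort_key)
    show "distinct (map f' ?R)" "distinct (map f' ?L)"
      using f'_inj g B set by (simp_all add: distinct_map comp_inj_on)
    show "set (map f' ?L) = set (map f' ?R)"
      unfolding list.set_map[of f' ?L] list.set_map[of f' ?R] set ..
  qed (rule sorted_sort_key)
  then show ?thesis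
    using f'_inj set by (subst (asm) inj_on_map_eq_map) auto
qed

definition rot_config :: "nat \<Rightarrow> (nat \<Rightarrow> site_state) \<Rightarrow> nat \<Rightarrow> site_state" where
  "rot_config n c = (\<lambda>y. if y < n then c (rot_inv n y) else c y)"

definition rot_sites :: "nat \<Rightarrow> (nat \<Rightarrow> 'a) \<Rightarrow> nat \<Rightarrow> 'a" where
  "rot_sites n \<omega> = (\<lambda>y\<in>{..<n}. \<omega> (rot_inv n y))"

definition rot_outcome :: "nat \<Rightarrow> golf_outcome \<Rightarrow> golf_outcome" where
  "rot_outcome n = map_prod (rot_config n) (rot_sites n)"

lemma snd_rot_outcome_rot:
  assumes "1 \<le> n" "y < n"
  shows "snd (rot_outcome n \<omega>) (rot n y) = snd \<omega> y"
  using assms by (simp add: rot_outcome_def rot_sites_def rot_less rot_inv_rot)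

lemma golf_balls_rot_outcome:
  assumes "1 \<le> n"
  shows "golf_balls n (rot_outcome n \<omega>) = rot n ` golf_balls n \<omega>"
  unfolding golf_balls_def rot_image_Collect[OF assms] by (auto simp: rot_outcome_def rot_config_def)

lemma golf_H0_rot_outcome:
  assumes "1 \<le> n"
  shows "golf_H0 n (rot_outcome n \<omega>) = rot n ` golf_H0 n \<omega>"
  unfolding golf_H0_def rot_image_Collect[OF assms] by (auto simp: rot_outcome_def rot_config_def)

text \<open>Distinct clocks are needed: ties in golf_order are broken by site index, which the
  rotation does not preserve.\<close>

lemma golf_order_rot_outcome:
  assumes n: "1 \<le> n" and inj: "inj_on (\<lambda>y. fst (snd \<omega> y)) {..<n}"
  shows "golf_order n (rot_outcome n \<omega>) = map (rot n) (golf_order n \<omega>)"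
  unfolding golf_order_def golf_balls_rot_outcome[OF n]
proof (rule sort_key_sorted_list_of_set_image)
  show "inj_on (rot n) (golf_balls n \<omega>)" "inj_on (\<lambda>y. fst (snd \<omega> y)) (golf_balls n \<omega>)"
    by (rule inj_on_subset[OF inj_on_rot golf_balls_subset] inj_on_subset[OF inj golf_balls_subset])+
  show "fst (snd (rot_outcome n \<omega>) (rot n y)) = fst (snd \<omega> y)" if "y \<in> golf_balls n \<omega>" for y
  proof -
    have "y < n"
      using that golf_balls_subset by blast
    then show ?thesis
      by (simp add: snd_rot_outcome_rot[OF n])
  qed
qed (rule finite_golf_balls)

lemma golf_step_rot:
  assumes n: "1 \<le> n" and U: "U \<subseteq> {..<n}"
    and s: "snd (snd \<omega>' (rot n y)) = snd (snd \<omega> y)"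
  shows "golf_step n \<omega>' (rot n y) (rot n ` U) = rot n ` golf_step n \<omega> y U"
proof (cases "walk_hit n y (snd (snd \<omega> y)) U")
  case (Some h)
  then have "h \<in> U"
    by (rule walk_hit_mem)
  then have "rot n ` (U - {h}) = rot n ` U - {rot n h}"
    using U by (subst inj_on_image_set_diff[OF inj_on_rot]) auto
  with Some show ?thesis
    by (simp add: golf_step_def s walk_hit_rot[OF n U])
qed (simp add: golf_step_def s walk_hit_rot[OF n U])

lemma fold_golf_step_rot:
  assumes n: "1 \<le> n" and U: "U \<subseteq> {..<n}"
    and s: "\<And>y. y \<in> set L \<Longrightarrow> snd (snd \<omega>' (rot n y)) = snd (snd \<omega> y)"
  shows "fold (golf_step n \<omega>') (map (rot n) L) (rot n ` U) = rot n ` fold (golf_step n \<omega>) L U"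
  using U s
proof (induction L arbitrary: U)
  case (Cons y L)
  have "golf_step n \<omega> y U \<subseteq> {..<n}"
    using golf_step_subset Cons.prems(1) by blast
  with Cons show ?case
    by (simp add: golf_step_rot[OF n])
qed simp

lemma golf_H1_rot_outcome:
  assumes n: "1 \<le> n" and inj: "inj_on (\<lambda>y. fst (snd \<omega> y)) {..<n}"
  shows "golf_H1 n (rot_outcome n \<omega>) = rot n ` golf_H1 n \<omega>"
  unfolding golf_H1_def golf_order_rot_outcome[OF n inj] golf_H0_rot_outcome[OF n]
proof (rule fold_golf_step_rot[OF n golf_H0_subset])
  show "snd (snd (rot_outcome n \<omega>) (rot n y)) = snd (snd \<omega> y)" if "y \<in> set (golf_order n \<omega>)" for y
  proof -
    have "y < n"
      using that golf_balls_subset set_golf_order by blast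
    then show ?thesis
      by (simp add: snd_rot_outcome_rot[OF n])
  qed
qed

section \<open>The probability space and measurability\<close>

abbreviation clock_measure :: "real measure" where
  "clock_measure \<equiv> uniform_measure lborel {0..1}"

abbreviation steps_measure :: "real \<Rightarrow> bool stream measure" where
  "steps_measure p \<equiv> stream_space (measure_pmf (bernoulli_pmf p))"

abbreviation site_measure :: "real \<Rightarrow> (real \<times> bool stream) measure" where
  "site_measure p \<equiv> clock_measure \<Otimes>\<^sub>M steps_measure p"

abbreviation sites_measure :: "nat \<Rightarrow> real \<Rightarrow> (nat \<Rightarrow> real \<times> bool stream) measure" where
  "sites_measure n p \<equiv> \<Pi>\<^sub>M y\<in>{..<n}. site_measure p"

abbreviation config_measure :: "nat \<Rightarrow> nat \<Rightarrow> nat \<Rightarrow> (nat \<Rightarrow> site_state) measure" where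
  "config_measure n Nb Nh \<equiv> measure_pmf (pmf_of_set (golf_configs n Nb Nh))"

lemma prob_space_steps_measure: "prob_space (steps_measure p)"
  by (rule prob_space.prob_space_stream_space[OF prob_space_measure_pmf])

lemma prob_space_site_measure: "prob_space (site_measure p)"
  by (intro prob_space_pair prob_space_steps_measure prob_space_uniform_measure) auto

lemma prob_space_sites_measure: "prob_space (sites_measure n p)"
  by (rule prob_space_PiM[OF prob_space_site_measure])

lemma prob_space_golf_space: "prob_space (golf_space n Nb Nh p)"
  unfolding golf_space_def by (intro prob_space_pair prob_space_sites_measure prob_space_measure_pmf)

lemma space_steps_measure: "space (steps_measure p) = UNIV"
  by (simp add: space_stream_space)

lemma measurable_count_space_restrict:
  "f \<in> measurable M (count_space UNIV) \<Longrightarrow> f \<in> space M \<rightarrow> A \<Longrightarrow> f \<in> measurable M (count_space A)"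
  by (auto simp: measurable_def)

lemma measurable_sort_key:
  fixes f :: "'m \<Rightarrow> 'a::countable \<Rightarrow> 'b::linorder"
  assumes "\<And>x y. Measurable.pred M (\<lambda>\<omega>. f \<omega> x \<le> f \<omega> y)"
  shows "(\<lambda>\<omega>. sort_key (f \<omega>) xs) \<in> measurable M (count_space UNIV)"
proof -
  have insort: "(\<lambda>\<omega>. insort_key (f \<omega>) x L) \<in> measurable M (count_space UNIV)" for x L
  proof (induction L)
    case (Cons a L)
    have "(\<lambda>\<omega>. a # insort_key (f \<omega>) x L) \<in> measurable M (count_space UNIV)"
      by (rule measurable_compose[OF Cons]) simp
    then show ?case
      using assms by (simp add: measurable_If pred_def)
  qed simp
  show ?thesis
  proof (induction xs)
    case (Cons x xs)
    have "(\<lambda>\<omega>. (\<lambda>L \<omega>. insort_key (f \<omega>) x L) (sort_key (f \<omega>) xs) \<omega>) \<in> measurable M (count_space UNIV)"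
      by (rule measurable_compose_countable'[OF insort Cons]) simp
    then show ?case
      by simp
  qed simp
qed

lemma measurable_walk_pos: "(\<lambda>s. walk_pos n y s k) \<in> measurable (steps_measure p) (count_space UNIV)"
proof -
  define h where "h l = nat ((int y + (\<Sum>i<length l. if l ! i then 1 else -1)) mod int n)" for l
  have "walk_pos n y s k = h (stake k s)" for s
    by (simp add: h_def walk_pos_def length_stake)
  moreover have "stake k \<in> measurable (steps_measure p) (count_space UNIV)"
    using measurable_stake sets_stream_space_cong[of "measure_pmf (bernoulli_pmf p)" "count_space UNIV"]
      measurable_cong_sets by fastforce
  ultimately show ?thesis
    by simp
qed

lemma measurable_walk_hit: "(\<lambda>s. walk_hit n y s U) \<in> measurable (steps_measure p) (count_space UNIV)"
proof -
  note measurable_walk_pos[measurable]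
  have [measurable]: "(\<lambda>s. LEAST k. walk_pos n y s k \<in> U) \<in> measurable (steps_measure p) (count_space UNIV)"
    by measurable
  have "(\<lambda>s. walk_pos n y s (LEAST k. walk_pos n y s k \<in> U)) \<in> measurable (steps_measure p) (count_space UNIV)"
    by (rule measurable_compose_countable'[where I=UNIV]) (auto intro: measurable_walk_pos)
  then show ?thesis
    unfolding walk_hit_def by measurable
qed

lemma measurable_clock: "fst \<in> borel_measurable (site_measure p)"
  using measurable_fst measurable_cong_sets by fastforce

lemma measurable_site_golf_space:
  "y < n \<Longrightarrow> (\<lambda>\<omega>. snd \<omega> y) \<in> measurable (golf_space n Nb Nh p) (site_measure p)"
  unfolding golf_space_def by (rule measurable_compose[OF measurable_snd measurable_component_singleton]) simp

lemma measurable_clock_golf_space: "(\<lambda>\<omega>. fst (snd \<omega> y)) \<in> borel_measurable (golf_space n Nb Nh p)"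
proof (cases "y < n")
  case True
  then show ?thesis
    by (rule measurable_compose[OF measurable_site_golf_space measurable_clock])
next
  case False
  then have "\<omega> \<in> space (golf_space n Nb Nh p) \<Longrightarrow> snd \<omega> y = undefined" for \<omega>
    by (auto simp: golf_space_def space_pair_measure space_PiM PiE_def extensional_def)
  then show ?thesis
    by (subst measurable_cong[where g="\<lambda>_. fst undefined"]) simp_all
qed

lemma measurable_golf_step:
  assumes "y < n"
  shows "(\<lambda>\<omega>. golf_step n \<omega> y U) \<in> measurable (golf_space n Nb Nh p) (count_space UNIV)"
proof -
  have "(\<lambda>\<omega>. walk_hit n y (snd (snd \<omega> y)) U) \<in> measurable (golf_space n Nb Nh p) (count_space UNIV)"
    using measurable_compose[OF measurable_site_golf_space[OF assms] measurable_snd] measurable_walk_hit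
    by (rule measurable_compose)
  then show ?thesis
    unfolding golf_step_def
    by (rule measurable_compose[where g="\<lambda>h. case h of Some h \<Rightarrow> U - {h} | None \<Rightarrow> U"]) simp
qed

lemma measurable_fold_golf_step:
  "set L \<subseteq> {..<n} \<Longrightarrow> U \<subseteq> {..<n} \<Longrightarrow>
    (\<lambda>\<omega>. fold (golf_step n \<omega>) L U) \<in> measurable (golf_space n Nb Nh p) (count_space UNIV)"
proof (induction L arbitrary: U)
  case (Cons y L)
  have "(\<lambda>\<omega>. golf_step n \<omega> y U) \<in> measurable (golf_space n Nb Nh p) (count_space (Pow {..<n}))"
    using Cons.prems golf_step_subset
    by (intro measurable_count_space_restrict[OF measurable_golf_step]) (auto, blast)
  then have "(\<lambda>\<omega>. (\<lambda>V \<omega>. fold (golf_step n \<omega>) L V) (golf_step n \<omega> y U) \<omega>)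
      \<in> measurable (golf_space n Nb Nh p) (count_space UNIV)"
    by (rule measurable_compose_countable'[rotated]) (use Cons in \<open>auto intro: countable_finite\<close>)
  then show ?case
    by simp
qed simp

lemma measurable_fst_golf_space:
  "(\<lambda>\<omega>. f (fst \<omega>)) \<in> measurable (golf_space n Nb Nh p) (count_space UNIV)"
  unfolding golf_space_def by (rule measurable_compose[OF measurable_fst]) simp

lemma measurable_golf_H0: "golf_H0 n \<in> measurable (golf_space n Nb Nh p) (count_space (Pow {..<n}))"
  unfolding golf_H0_def
  by (rule measurable_count_space_restrict[OF measurable_fst_golf_space[where f="\<lambda>c. {y. y < n \<and> c y = Hole}"]]) auto

lemma measurable_golf_order:
  "golf_order n \<in> measurable (golf_space n Nb Nh p) (count_space {L. set L \<subseteq> {..<n}})"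
proof (rule measurable_count_space_restrict)
  note measurable_clock_golf_space[measurable]
  have "golf_balls n \<in> measurable (golf_space n Nb Nh p) (count_space (Pow {..<n}))"
    unfolding golf_balls_def
    by (rule measurable_count_space_restrict[OF measurable_fst_golf_space[where f="\<lambda>c. {y. y < n \<and> c y = Ball}"]]) auto
  then have "(\<lambda>\<omega>. (\<lambda>B \<omega>. sort_key (\<lambda>y. fst (snd \<omega> y)) (sorted_list_of_set B)) (golf_balls n \<omega>) \<omega>)
      \<in> measurable (golf_space n Nb Nh p) (count_space UNIV)"
    by (rule measurable_compose_countable'[rotated]) (auto intro: countable_finite measurable_sort_key)
  then show "golf_order n \<in> measurable (golf_space n Nb Nh p) (count_space UNIV)"
    unfolding golf_order_def[abs_def] by simp
  show "golf_order n \<in> space (golf_space n Nb Nh p) \<rightarrow> {L. set L \<subseteq> {..<n}}"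
    using set_golf_order golf_balls_subset by auto
qed

lemma measurable_golf_H1: "golf_H1 n \<in> measurable (golf_space n Nb Nh p) (count_space UNIV)"
proof -
  have "(\<lambda>\<omega>. (\<lambda>V \<omega>. fold (golf_step n \<omega>) (golf_order n \<omega>) V) (golf_H0 n \<omega>) \<omega>)
      \<in> measurable (golf_space n Nb Nh p) (count_space UNIV)"
  proof (rule measurable_compose_countable'[OF _ measurable_golf_H0])
    fix V assume "V \<in> Pow {..<n}"
    then show "(\<lambda>\<omega>. fold (golf_step n \<omega>) (golf_order n \<omega>) V) \<in> measurable (golf_space n Nb Nh p) (count_space UNIV)"
      by (intro measurable_compose_countable'[where f="\<lambda>L \<omega>. fold (golf_step n \<omega>) L V", OF _ measurable_golf_order])
        (auto intro: countableI_type measurable_fold_golf_step)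
  qed (auto intro: countable_finite)
  then show ?thesis
    unfolding golf_H1_def[abs_def] by simp
qed

lemma finite_golf_configs: "finite (golf_configs n Nb Nh)"
proof (rule finite_subset)
  show "golf_configs n Nb Nh \<subseteq> {c. \<forall>y. (y \<in> {..<n} \<longrightarrow> c y \<in> UNIV) \<and> (y \<notin> {..<n} \<longrightarrow> c y = Neutral)}"
    by (auto simp: golf_configs_def)
  have states: "(UNIV :: site_state set) = {Ball, Hole, Neutral}"
    using site_state.exhaust by auto
  show "finite {c. \<forall>y. (y \<in> {..<n} \<longrightarrow> c y \<in> UNIV) \<and> (y \<notin> {..<n} \<longrightarrow> c y = Neutral)}"
    by (rule finite_set_of_finite_funs) (auto simp: states)
qed

lemma golf_configs_nonempty:
  assumes "Nb + Nh \<le> n"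
  shows "golf_configs n Nb Nh \<noteq> {}"
proof -
  define c where "c y = (if y < Nb then Ball else if y < Nb + Nh then Hole else Neutral)" for y
  have "{y. y < n \<and> c y = Ball} = {..<Nb}" "{y. y < n \<and> c y = Hole} = {Nb..<Nb + Nh}"
    using assms by (auto simp: c_def)
  then have "c \<in> golf_configs n Nb Nh"
    using assms by (auto simp: golf_configs_def c_def)
  then show ?thesis
    by blast
qed

lemma inj_rot_config:
  assumes n: "1 \<le> n"
  shows "inj (rot_config n)"
proof (rule injI)
  fix c d assume eq: "rot_config n c = rot_config n d"
  show "c = d"
  proof
    fix y
    show "c y = d y"
    proof (cases "y < n")
      case True
      then show ?thesis
        using fun_cong[OF eq, of "rot n y"] by (simp add: rot_config_def rot_less[OF n] rot_inv_rot)
    qed (use fun_cong[OF eq, of y] in \<open>simp add: rot_config_def\<close>)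
  qed
qed

lemma rot_config_image_golf_configs:
  assumes n: "1 \<le> n"
  shows "rot_config n ` golf_configs n Nb Nh = golf_configs n Nb Nh"
proof (rule endo_inj_surj[OF finite_golf_configs])
  have "{y. y < n \<and> rot_config n c y = s} = rot n ` {y. y < n \<and> c y = s}" for c s
    unfolding rot_image_Collect[OF n] by (auto simp: rot_config_def)
  moreover have "card (rot n ` {y. y < n \<and> c y = s}) = card {y. y < n \<and> c y = s}" for c s
    by (rule card_image) (auto intro: inj_on_subset[OF inj_on_rot])
  ultimately show "rot_config n ` golf_configs n Nb Nh \<subseteq> golf_configs n Nb Nh"
    by (auto simp: golf_configs_def) (simp add: rot_config_def)
  show "inj_on (rot_config n) (golf_configs n Nb Nh)"
    using inj_rot_config[OF n] by (rule inj_on_subset) simp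
qed

lemma distr_config_measure_rot:
  assumes n: "1 \<le> n" and ne: "golf_configs n Nb Nh \<noteq> {}"
  shows "distr (config_measure n Nb Nh) (config_measure n Nb Nh) (rot_config n) = config_measure n Nb Nh"
proof -
  have "distr (config_measure n Nb Nh) (config_measure n Nb Nh) (rot_config n)
      = distr (config_measure n Nb Nh) (count_space UNIV) (rot_config n)"
    by (rule distr_cong) simp_all
  also have "\<dots> = measure_pmf (map_pmf (rot_config n) (pmf_of_set (golf_configs n Nb Nh)))"
    by (rule map_pmf_rep_eq[symmetric])
  also have "map_pmf (rot_config n) (pmf_of_set (golf_configs n Nb Nh)) = pmf_of_set (golf_configs n Nb Nh)"
    using inj_rot_config[OF n] finite_golf_configs ne
    by (subst map_pmf_of_set_inj) (auto intro: inj_on_subset simp: rot_config_image_golf_configs[OF n])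
  finally show ?thesis .
qed

lemma measurable_rot_sites:
  "1 \<le> n \<Longrightarrow> rot_sites n \<in> measurable (sites_measure n p) (sites_measure n p)"
  unfolding rot_sites_def
  by (intro measurable_restrict measurable_component_singleton) (simp add: rot_inv_less)

lemma distr_sites_measure_rot:
  "1 \<le> n \<Longrightarrow> distr (sites_measure n p) (sites_measure n p) (rot_sites n) = sites_measure n p"
  using distr_PiM_reindex[of "{..<n}" "\<lambda>_. site_measure p" "rot_inv n" "{..<n}",
      OF prob_space_site_measure inj_on_rot_inv]
  by (simp add: rot_inv_less rot_sites_def[abs_def])

lemma measurable_rot_outcome:
  assumes n: "1 \<le> n"
  shows "rot_outcome n \<in> measurable (golf_space n Nb Nh p) (golf_space n Nb Nh p)"
proof -
  have "rot_outcome n = (\<lambda>\<omega>. (rot_config n (fst \<omega>), rot_sites n (snd \<omega>)))"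
    by (auto simp: rot_outcome_def)
  then show ?thesis
    unfolding golf_space_def
    by (simp add: measurable_Pair measurable_compose[OF measurable_fst] measurable_compose[OF measurable_snd
      measurable_rot_sites[OF n]])
qed

lemma distr_golf_space_rot:
  assumes n: "1 \<le> n" and ne: "golf_configs n Nb Nh \<noteq> {}"
  shows "distr (golf_space n Nb Nh p) (golf_space n Nb Nh p) (rot_outcome n) = golf_space n Nb Nh p"
proof -
  have "distr (config_measure n Nb Nh) (config_measure n Nb Nh) (rot_config n) \<Otimes>\<^sub>M
      distr (sites_measure n p) (sites_measure n p) (rot_sites n)
    = distr (golf_space n Nb Nh p) (golf_space n Nb Nh p) (\<lambda>(c, \<omega>). (rot_config n c, rot_sites n \<omega>))"
    unfolding golf_space_def
    by (rule pair_measure_distr)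
      (auto simp: measurable_rot_sites[OF n] distr_sites_measure_rot[OF n]
        intro: prob_space_imp_sigma_finite prob_space_sites_measure)
  then show ?thesis
    by (simp add: distr_config_measure_rot[OF n ne] distr_sites_measure_rot[OF n] map_prod_def
        rot_outcome_def golf_space_def)
qed

lemma measure_golf_space_preimage_rot:
  assumes n: "1 \<le> n" and ne: "golf_configs n Nb Nh \<noteq> {}" and A: "A \<in> sets (golf_space n Nb Nh p)"
  shows "measure (golf_space n Nb Nh p) (rot_outcome n -` A \<inter> space (golf_space n Nb Nh p))
    = measure (golf_space n Nb Nh p) A"
  using measure_distr[OF measurable_rot_outcome[OF n] A] by (simp add: distr_golf_space_rot[OF n ne])

section \<open>Bernoulli step streams\<close>

lemma (in prob_space) measure_stream_space_sdrop:
  assumes X: "X \<in> sets (stream_space M)"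
  shows "measure (stream_space M) {s \<in> space (stream_space M). sdrop m s \<in> X} = measure (stream_space M) X"
proof (induction m)
  case 0
  show ?case
    using sets.sets_into_space[OF X] by (simp add: Int_absorb2 Collect_conj_eq Int_commute)
next
  case (Suc m)
  have "{s \<in> space (stream_space M). sdrop (Suc m) s \<in> X} \<in> sets (stream_space M)"
    using X by measurable
  then have "ennreal (measure (stream_space M) {s \<in> space (stream_space M). sdrop (Suc m) s \<in> X})
      = (\<integral>\<^sup>+t. ennreal (measure (stream_space M) {s \<in> space (stream_space M). sdrop m s \<in> X}) \<partial>M)"
    by (subst prob_stream_space) (auto simp: space_stream_space)
  also have "\<dots> = ennreal (measure (stream_space M) X)"
    by (simp add: Suc emeasure_space_1)
  finally show ?case
    by simp
qed

lemma measure_stream_space_pmf_const_prefix: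
  fixes q :: "'a pmf"
  assumes X: "X \<in> sets (stream_space (measure_pmf q))"
  shows "measure (stream_space (measure_pmf q))
      {s \<in> space (stream_space (measure_pmf q)). (\<forall>i<m. s !! i = b) \<and> sdrop m s \<in> X}
    = pmf q b ^ m * measure (stream_space (measure_pmf q)) X"
proof (induction m)
  case 0
  show ?case
    using sets.sets_into_space[OF X] by (simp add: Int_absorb2 Collect_conj_eq Int_commute)
next
  case (Suc m)
  let ?S = "stream_space (measure_pmf q)"
  define c where "c = measure ?S {s \<in> space ?S. (\<forall>i<m. s !! i = b) \<and> sdrop m s \<in> X}"
  have "{s \<in> space ?S. (\<forall>i<Suc m. s !! i = b) \<and> sdrop (Suc m) s \<in> X} \<in> sets ?S"
    using X by measurable
  then have "ennreal (measure ?S {s \<in> space ?S. (\<forall>i<Suc m. s !! i = b) \<and> sdrop (Suc m) s \<in> X})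
      = (\<integral>\<^sup>+t. ennreal (measure ?S
          {s \<in> space ?S. (\<forall>i<Suc m. (t ## s) !! i = b) \<and> sdrop (Suc m) (t ## s) \<in> X}) \<partial>measure_pmf q)"
    by (subst prob_space.prob_stream_space[OF prob_space_measure_pmf]) (auto simp: space_stream_space)
  also have "\<dots> = (\<integral>\<^sup>+t. ennreal c * indicator {b} t \<partial>measure_pmf q)"
  proof (intro nn_integral_cong)
    fix t
    have prefix: "(\<forall>i<Suc m. (t ## s) !! i = b) \<longleftrightarrow> t = b \<and> (\<forall>i<m. s !! i = b)" for s
      by (auto simp: less_Suc_eq_0_disj)
    show "ennreal (measure ?S {s \<in> space ?S. (\<forall>i<Suc m. (t ## s) !! i = b) \<and> sdrop (Suc m) (t ## s) \<in> X})
        = ennreal c * indicator {b} t"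
      unfolding prefix by (cases "t = b") (simp_all add: c_def)
  qed
  also have "\<dots> = ennreal c * ennreal (pmf q b)"
    by (simp add: nn_integral_cmult_indicator emeasure_pmf_single)
  also have "\<dots> = ennreal (pmf q b ^ Suc m * measure ?S X)"
    using Suc by (simp add: c_def ennreal_mult'[symmetric] mult_ac)
  finally show ?case
    by simp
qed

lemma measure_nonconstant_first_block:
  assumes n: "1 \<le> n" and p: "0 \<le> p" "p \<le> 1" and X: "X \<in> sets (steps_measure p)"
  shows "measure (steps_measure p) {s. \<not> (\<exists>b. \<forall>i<n. s !! i = b) \<and> sdrop n s \<in> X}
    = (1 - p ^ n - (1 - p) ^ n) * measure (steps_measure p) X"
proof -
  interpret S: prob_space "steps_measure p"
    by (rule prob_space_steps_measure)
  define A where "A = {s \<in> space (steps_measure p). sdrop n s \<in> X}"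
  define C where "C b = {s \<in> space (steps_measure p). (\<forall>i<n. s !! i = b) \<and> sdrop n s \<in> X}" for b
  have sets: "A \<in> S.events" "C b \<in> S.events" for b
    unfolding A_def C_def using X by measurable
  have "{s. \<not> (\<exists>b. \<forall>i<n. s !! i = b) \<and> sdrop n s \<in> X} = A - (C True \<union> C False)"
    by (auto simp: A_def C_def space_steps_measure ex_bool_eq)
  moreover have "C True \<inter> C False = {}"
    using n by (auto simp: C_def)
  moreover have "C True \<union> C False \<subseteq> A"
    by (auto simp: A_def C_def)
  ultimately have "measure (steps_measure p) {s. \<not> (\<exists>b. \<forall>i<n. s !! i = b) \<and> sdrop n s \<in> X}
      = S.prob A - (S.prob (C True) + S.prob (C False))"
    using sets by (simp add: S.finite_measure_Diff S.finite_measure_Union)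
  also have "S.prob A = S.prob X"
    unfolding A_def by (rule prob_space.measure_stream_space_sdrop[OF prob_space_measure_pmf X])
  also have "S.prob (C True) = p ^ n * S.prob X"
    using measure_stream_space_pmf_const_prefix[OF X, of n True] p by (simp add: C_def)
  also have "S.prob (C False) = (1 - p) ^ n * S.prob X"
    using measure_stream_space_pmf_const_prefix[OF X, of n False] p by (simp add: C_def)
  finally show ?thesis
    using p by (simp add: algebra_simps)
qed

definition nonconstant_blocks :: "nat \<Rightarrow> nat \<Rightarrow> bool stream set" where
  "nonconstant_blocks n k = {s. \<forall>m<k. \<not> (\<exists>b. \<forall>i<n. s !! (m * n + i) = b)}"

lemma nonconstant_blocks_sets: "nonconstant_blocks n k \<in> sets (steps_measure p)"
proof -
  have "{s \<in> space (steps_measure p). \<forall>m<k. \<not> (\<exists>b. \<forall>i<n. s !! (m * n + i) = b)} \<in> sets (steps_measure p)"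
    by measurable
  then show ?thesis
    by (simp add: nonconstant_blocks_def space_steps_measure)
qed

lemma nonconstant_blocks_Suc:
  "nonconstant_blocks n (Suc k) = {s. \<not> (\<exists>b. \<forall>i<n. s !! i = b) \<and> sdrop n s \<in> nonconstant_blocks n k}"
  unfolding nonconstant_blocks_def All_less_Suc2 by (simp add: sdrop_snth ac_simps)

lemma measure_nonconstant_blocks:
  assumes "1 \<le> n" "0 \<le> p" "p \<le> 1"
  shows "measure (steps_measure p) (nonconstant_blocks n k) = (1 - p ^ n - (1 - p) ^ n) ^ k"
proof (induction k)
  case 0
  have "nonconstant_blocks n 0 = space (steps_measure p)"
    by (simp add: nonconstant_blocks_def space_steps_measure)
  then show ?case
    using prob_space.prob_space[OF prob_space_steps_measure] by simp
next
  case (Suc k)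
  then show ?case
    by (simp only: nonconstant_blocks_Suc measure_nonconstant_first_block[OF assms nonconstant_blocks_sets]
        power_Suc)
qed

text \<open>Blocks of length n are independent and each is constant with probability
  p^n + (1-p)^n > 0, so almost surely one of them is.\<close>

lemma AE_steps_constant_run:
  assumes n: "1 \<le> n" and p: "0 \<le> p" "p \<le> 1"
  shows "AE s in steps_measure p. \<exists>j b. \<forall>i<n. s !! (j + i) = b"
proof -
  interpret S: prob_space "steps_measure p"
    by (rule prob_space_steps_measure)
  define N where "N = {s :: bool stream. \<not> (\<exists>j b. \<forall>i<n. s !! (j + i) = b)}"
  define c where "c = 1 - p ^ n - (1 - p) ^ n"
  have N: "N \<in> S.events"
  proof -
    have "{s \<in> space (steps_measure p). \<not> (\<exists>j b. \<forall>i<n. s !! (j + i) = b)} \<in> S.events"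
      by measurable
    then show ?thesis
      by (simp add: N_def space_steps_measure)
  qed
  have "S.prob N \<le> c ^ k" for k
  proof -
    have "N \<subseteq> nonconstant_blocks n k"
      unfolding N_def nonconstant_blocks_def by blast
    then have "S.prob N \<le> S.prob (nonconstant_blocks n k)"
      by (rule S.finite_measure_mono[OF _ nonconstant_blocks_sets])
    then show ?thesis
      by (simp add: measure_nonconstant_blocks[OF n p] c_def)
  qed
  moreover have "0 \<le> c"
    using measure_nonconstant_blocks[OF n p, of 1] measure_nonneg[of "steps_measure p" "nonconstant_blocks n 1"]
    by (simp add: c_def)
  moreover have "c < 1"
  proof -
    have "0 < p ^ n \<or> 0 < (1 - p) ^ n"
      using p by (cases "p = 0") simp_all
    moreover have "0 \<le> p ^ n" "0 \<le> (1 - p) ^ n"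
      using p by simp_all
    ultimately show ?thesis
      by (auto simp: c_def)
  qed
  ultimately have "S.prob N \<le> 0"
    by (intro LIMSEQ_le_const[OF LIMSEQ_power_zero]) auto
  then have "N \<in> null_sets (steps_measure p)"
    using N by (simp add: S.emeasure_eq_measure null_setsI measure_le_0_iff)
  then show ?thesis
    by (rule AE_I') (auto simp: N_def)
qed

lemma AE_walk_pos_surj:
  assumes "1 \<le> n" "0 \<le> p" "p \<le> 1"
  shows "AE s in steps_measure p. \<forall>z<n. \<exists>k. walk_pos n y s k = z"
  using AE_steps_constant_run[OF assms] by eventually_elim (use walk_pos_surj_of_run[OF assms(1)] in blast)

lemma AE_pair_fstI:
  assumes "sigma_finite_measure N" and "AE x in M. P x"
  shows "AE z in M \<Otimes>\<^sub>M N. P (fst z)"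
proof -
  from assms(2) obtain A where A: "{x \<in> space M. \<not> P x} \<subseteq> A" "emeasure M A = 0" "A \<in> sets M"
    by (auto elim!: AE_E)
  have "A \<times> space N \<in> null_sets (M \<Otimes>\<^sub>M N)"
    using A by (intro sigma_finite_measure.times_in_null_sets1[OF assms(1)]) auto
  then show ?thesis
    by (rule AE_I') (use A in \<open>auto simp: space_pair_measure\<close>)
qed

lemma AE_pair_sndI:
  assumes "sigma_finite_measure N" and "AE y in N. P y"
  shows "AE z in M \<Otimes>\<^sub>M N. P (snd z)"
proof -
  from assms(2) obtain B where B: "{y \<in> space N. \<not> P y} \<subseteq> B" "emeasure N B = 0" "B \<in> sets N"
    by (auto elim!: AE_E)
  have "space M \<times> B \<in> null_sets (M \<Otimes>\<^sub>M N)"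
    using B by (intro sigma_finite_measure.times_in_null_sets2[OF assms(1)]) auto
  then show ?thesis
    by (rule AE_I') (use B in \<open>auto simp: space_pair_measure\<close>)
qed

lemma AE_clock_neq: "AE \<kappa> in site_measure p. fst \<kappa> \<noteq> t"
proof (intro AE_pair_fstI prob_space_imp_sigma_finite prob_space_steps_measure AE_uniform_measureI)
  show "AE x in lborel. x \<in> {0..1} \<longrightarrow> x \<noteq> t"
    using AE_lborel_singleton[of t] by eventually_elim simp
qed simp

lemma measurable_clock_component:
  "y \<in> I \<Longrightarrow> (\<lambda>\<omega>. fst (\<omega> y)) \<in> borel_measurable (\<Pi>\<^sub>M i\<in>I. site_measure p)"
  by (rule measurable_compose[of _ _ "site_measure p"]) (simp_all add: measurable_clock)

text \<open>Fubini: split off site z; for each value of its clock, the clock at y avoids it a.s.\<close>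

lemma AE_clocks_neq:
  assumes y: "y < n" and z: "z < n" and yz: "y \<noteq> z"
  shows "AE \<omega> in sites_measure n p. fst (\<omega> y) \<noteq> fst (\<omega> z)"
proof -
  let ?I = "{..<n} - {z}" and ?K = "site_measure p"
  interpret pair_sigma_finite ?K "\<Pi>\<^sub>M i\<in>?I. ?K"
    by (intro pair_sigma_finite.intro prob_space_imp_sigma_finite prob_space_site_measure prob_space_PiM)
  have insert: "insert z ?I = {..<n}"
    using z by auto
  have distr: "distr (?K \<Otimes>\<^sub>M (\<Pi>\<^sub>M i\<in>?I. ?K)) (sites_measure n p) (\<lambda>(x, X). X(z := x)) = sites_measure n p"
    using distr_pair_PiM_eq_PiM[of ?I "\<lambda>_. ?K" z] prob_space_site_measure unfolding insert by blast
  have [measurable]: "(\<lambda>x. fst (fst x)) \<in> borel_measurable (?K \<Otimes>\<^sub>M (\<Pi>\<^sub>M i\<in>?I. ?K))"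
    by (rule measurable_compose[OF measurable_fst measurable_clock])
  have [measurable]: "(\<lambda>x. fst (snd x y)) \<in> borel_measurable (?K \<Otimes>\<^sub>M (\<Pi>\<^sub>M i\<in>?I. ?K))"
    using y yz by (intro measurable_compose[OF measurable_snd measurable_clock_component]) simp
  have "AE \<kappa> in ?K. AE \<omega> in \<Pi>\<^sub>M i\<in>?I. ?K. fst (\<omega> y) \<noteq> fst \<kappa>"
    using y yz by (intro AE_I2 AE_PiM_component prob_space_site_measure AE_clock_neq) auto
  moreover have "{x \<in> space (?K \<Otimes>\<^sub>M (\<Pi>\<^sub>M i\<in>?I. ?K)). fst (snd x y) \<noteq> fst (fst x)}
      \<in> sets (?K \<Otimes>\<^sub>M (\<Pi>\<^sub>M i\<in>?I. ?K))"
    by measurable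
  ultimately have pair: "AE x in ?K \<Otimes>\<^sub>M (\<Pi>\<^sub>M i\<in>?I. ?K). fst (snd x y) \<noteq> fst (fst x)"
    by (intro AE_pair_measure) auto
  have "AE \<omega> in distr (?K \<Otimes>\<^sub>M (\<Pi>\<^sub>M i\<in>?I. ?K)) (sites_measure n p) (\<lambda>(x, X). X(z := x)).
      fst (\<omega> y) \<noteq> fst (\<omega> z)"
  proof (subst AE_distr_iff)
    have "(\<lambda>(x, X). X(z := x)) \<in> measurable (?K \<Otimes>\<^sub>M (\<Pi>\<^sub>M i\<in>?I. ?K)) (\<Pi>\<^sub>M i\<in>insert z ?I. ?K)"
      by measurable
    then show "(\<lambda>(x, X). X(z := x)) \<in> measurable (?K \<Otimes>\<^sub>M (\<Pi>\<^sub>M i\<in>?I. ?K)) (sites_measure n p)"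
      by (simp only: insert)
    show "{\<omega> \<in> space (sites_measure n p). fst (\<omega> y) \<noteq> fst (\<omega> z)} \<in> sets (sites_measure n p)"
      using y z by (intro borel_measurable_neq measurable_clock_component) simp_all
  qed (use pair yz in \<open>simp add: case_prod_beta\<close>)
  then show ?thesis
    unfolding distr .
qed

definition golf_regular :: "nat \<Rightarrow> nat \<Rightarrow> nat \<Rightarrow> golf_outcome \<Rightarrow> bool" where
  "golf_regular n Nb Nh \<omega> \<longleftrightarrow> fst \<omega> \<in> golf_configs n Nb Nh \<and> inj_on (\<lambda>y. fst (snd \<omega> y)) {..<n}
     \<and> (\<forall>y<n. \<forall>z<n. \<exists>k. walk_pos n y (snd (snd \<omega> y)) k = z)"

lemma AE_golf_configs:
  assumes "golf_configs n Nb Nh \<noteq> {}"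
  shows "AE \<omega> in golf_space n Nb Nh p. fst \<omega> \<in> golf_configs n Nb Nh"
proof -
  have "AE c in config_measure n Nb Nh. c \<in> golf_configs n Nb Nh"
    using finite_golf_configs assms by (simp add: AE_measure_pmf_iff)
  then show ?thesis
    unfolding golf_space_def
    by (rule AE_pair_fstI[OF prob_space_imp_sigma_finite[OF prob_space_sites_measure]])
qed

lemma AE_golf_regular:
  assumes n: "1 \<le> n" and p: "0 \<le> p" "p \<le> 1" and ne: "golf_configs n Nb Nh \<noteq> {}"
  shows "AE \<omega> in golf_space n Nb Nh p. golf_regular n Nb Nh \<omega>"
proof -
  have sites: "sigma_finite_measure (sites_measure n p)"
    by (rule prob_space_imp_sigma_finite[OF prob_space_sites_measure])
  have "AE \<omega> in sites_measure n p. \<forall>y\<in>{..<n}. \<forall>z\<in>{..<n}. y \<noteq> z \<longrightarrow> fst (\<omega> y) \<noteq> fst (\<omega> z)"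
    by (intro AE_finite_allI) (auto intro: AE_clocks_neq)
  then have clocks: "AE \<omega> in golf_space n Nb Nh p. inj_on (\<lambda>y. fst (snd \<omega> y)) {..<n}"
    unfolding golf_space_def by (rule AE_pair_sndI[OF sites, THEN eventually_mono]) (auto simp: inj_on_def)
  have "AE \<omega> in sites_measure n p. \<forall>y\<in>{..<n}. \<forall>z<n. \<exists>k. walk_pos n y (snd (\<omega> y)) k = z"
  proof (intro AE_finite_allI)
    fix y assume "y \<in> {..<n}"
    moreover have "AE \<kappa> in site_measure p. \<forall>z<n. \<exists>k. walk_pos n y (snd \<kappa>) k = z"
      by (rule AE_pair_sndI[OF prob_space_imp_sigma_finite[OF prob_space_steps_measure] AE_walk_pos_surj[OF n p]])
    ultimately show "AE \<omega> in sites_measure n p. \<forall>z<n. \<exists>k. walk_pos n y (snd (\<omega> y)) k = z"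
      by (intro AE_PiM_component prob_space_site_measure)
  qed simp
  then have walks: "AE \<omega> in golf_space n Nb Nh p. \<forall>y<n. \<forall>z<n. \<exists>k. walk_pos n y (snd (snd \<omega> y)) k = z"
    unfolding golf_space_def by (rule AE_pair_sndI[OF sites, THEN eventually_mono]) simp
  show ?thesis
    using AE_golf_configs[OF ne] clocks walks unfolding golf_regular_def by eventually_elim blast
qed

lemma golf_prob_rot_image:
  assumes n: "1 \<le> n" and ne: "golf_configs n Nb Nh \<noteq> {}"
    and F: "F \<in> measurable (golf_space n Nb Nh p) (count_space UNIV)"
    and F_rot: "AE \<omega> in golf_space n Nb Nh p. F (rot_outcome n \<omega>) = rot n ` F \<omega>"
  shows "golf_prob n Nb Nh p {\<omega>. Q (rot n ` F \<omega>)} = golf_prob n Nb Nh p {\<omega>. Q (F \<omega>)}"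
proof -
  let ?M = "golf_space n Nb Nh p"
  have events: "{\<omega> \<in> space ?M. P \<omega>} \<in> sets ?M" if "P \<in> measurable ?M (count_space UNIV)" for P
    using that by (simp add: pred_def predE)
  have rot: "rot_outcome n \<in> measurable ?M ?M"
    by (rule measurable_rot_outcome[OF n])
  have "golf_prob n Nb Nh p {\<omega>. Q (F \<omega>)} = measure ?M {\<omega> \<in> space ?M. Q (F \<omega>)}"
    by (simp add: golf_prob_def Collect_conj_eq Int_commute)
  also have "\<dots> = measure ?M (rot_outcome n -` {\<omega> \<in> space ?M. Q (F \<omega>)} \<inter> space ?M)"
    by (intro measure_golf_space_preimage_rot[OF n ne, symmetric] events measurable_compose[OF F]) simp
  also have "rot_outcome n -` {\<omega> \<in> space ?M. Q (F \<omega>)} \<inter> space ?M = {\<omega> \<in> space ?M. Q (F (rot_outcome n \<omega>))}"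
    using measurable_space[OF rot] by auto
  also have "measure ?M \<dots> = measure ?M {\<omega> \<in> space ?M. Q (rot n ` F \<omega>)}"
    using F_rot
    by (intro measure_eq_AE events measurable_compose[OF F] measurable_compose[OF measurable_compose[OF rot F]])
      (auto elim!: eventually_mono)
  also have "\<dots> = golf_prob n Nb Nh p {\<omega>. Q (rot n ` F \<omega>)}"
    by (simp add: golf_prob_def Collect_conj_eq Int_commute)
  finally show ?thesis ..
qed

section \<open>Hitting probabilities\<close>

lemma golf_prob_H1_singleton_rot:
  assumes n: "1 \<le> n" and p: "0 \<le> p" "p \<le> 1" and ne: "golf_configs n Nb Nh \<noteq> {}" and y: "y < n"
  shows "golf_prob n Nb Nh p {\<omega>. golf_H1 n \<omega> = {rot n y}} = golf_prob n Nb Nh p {\<omega>. golf_H1 n \<omega> = {y}}"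
proof -
  have "AE \<omega> in golf_space n Nb Nh p. golf_H1 n (rot_outcome n \<omega>) = rot n ` golf_H1 n \<omega>"
    using AE_golf_regular[OF n p ne] by eventually_elim (simp add: golf_regular_def golf_H1_rot_outcome[OF n])
  then have "golf_prob n Nb Nh p {\<omega>. rot n ` golf_H1 n \<omega> = rot n ` {y}}
      = golf_prob n Nb Nh p {\<omega>. golf_H1 n \<omega> = rot n ` {y}}"
    by (rule golf_prob_rot_image[OF n ne measurable_golf_H1])
  moreover have "rot n ` golf_H1 n \<omega> = rot n ` {y} \<longleftrightarrow> golf_H1 n \<omega> = {y}" for \<omega>
    using golf_H1_subset_H0 golf_H0_subset y by (intro inj_on_image_eq_iff[OF inj_on_rot]) blast+
  ultimately show ?thesis
    by simp
qed

lemma golf_prob_mem_H0_rot: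
  assumes n: "1 \<le> n" and ne: "golf_configs n Nb Nh \<noteq> {}" and y: "y < n"
  shows "golf_prob n Nb Nh p {\<omega>. rot n y \<in> golf_H0 n \<omega>} = golf_prob n Nb Nh p {\<omega>. y \<in> golf_H0 n \<omega>}"
proof -
  have "golf_prob n Nb Nh p {\<omega>. rot n y \<in> rot n ` golf_H0 n \<omega>} = golf_prob n Nb Nh p {\<omega>. rot n y \<in> golf_H0 n \<omega>}"
    by (intro golf_prob_rot_image[OF n ne] measurable_compose[OF measurable_golf_H0] AE_I2
        golf_H0_rot_outcome[OF n]) simp
  moreover have "rot n y \<in> rot n ` golf_H0 n \<omega> \<longleftrightarrow> y \<in> golf_H0 n \<omega>" for \<omega>
    using golf_H0_subset y by (intro inj_on_image_mem_iff[OF inj_on_rot]) auto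
  ultimately show ?thesis
    by simp
qed

lemma sum_golf_prob_H1_singleton:
  assumes n: "1 \<le> n" and p: "0 \<le> p" "p \<le> 1" and ne: "golf_configs n Nb (Nb + 1) \<noteq> {}"
  shows "(\<Sum>y<n. golf_prob n Nb (Nb + 1) p {\<omega>. golf_H1 n \<omega> = {y}}) = 1"
proof -
  let ?M = "golf_space n Nb (Nb + 1) p"
  interpret prob_space ?M
    by (rule prob_space_golf_space)
  have events: "{\<omega>. golf_H1 n \<omega> = {y}} \<inter> space ?M \<in> events" for y
    using measurable_sets[OF measurable_golf_H1, of "{{y}}"] by (simp add: vimage_def)
  have "AE \<omega> in ?M. \<omega> \<in> (\<Union>y<n. {\<omega>. golf_H1 n \<omega> = {y}} \<inter> space ?M)"
    using AE_golf_regular[OF n p ne] AE_space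
  proof eventually_elim
    case (elim \<omega>)
    then have "card (golf_H1 n \<omega>) = 1"
      using card_golf_H1[of \<omega> n Nb "Nb + 1"] by (simp add: golf_regular_def)
    then obtain x where "golf_H1 n \<omega> = {x}"
      by (rule card_1_singletonE)
    moreover have "x < n"
      using calculation golf_H1_subset_H0 golf_H0_subset by blast
    ultimately show ?case
      using elim by blast
  qed
  moreover have "(\<Union>y<n. {\<omega>. golf_H1 n \<omega> = {y}} \<inter> space ?M) \<in> events"
    using events by (intro sets.finite_UN) auto
  ultimately have "prob (\<Union>y<n. {\<omega>. golf_H1 n \<omega> = {y}} \<inter> space ?M) = 1"
    by (metis prob_eq_1)
  moreover have "prob (\<Union>y<n. {\<omega>. golf_H1 n \<omega> = {y}} \<inter> space ?M) = (\<Sum>y<n. prob ({\<omega>. golf_H1 n \<omega> = {y}} \<inter> space ?M))"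
    using events by (intro finite_measure_finite_Union) (auto simp: disjoint_family_on_def)
  ultimately show ?thesis
    by (simp add: golf_prob_def)
qed

text \<open>Linearity of expectation: the indicators of the events y \<in> H^0 add up to the number of holes.\<close>

lemma sum_golf_prob_mem_H0:
  assumes ne: "golf_configs n Nb Nh \<noteq> {}"
  shows "(\<Sum>y<n. golf_prob n Nb Nh p {\<omega>. y \<in> golf_H0 n \<omega>}) = Nh"
proof -
  let ?M = "golf_space n Nb Nh p"
  interpret prob_space ?M
    by (rule prob_space_golf_space)
  define E where "E y = {\<omega>. y \<in> golf_H0 n \<omega>} \<inter> space ?M" for y
  have "golf_H0 n \<in> measurable ?M (count_space UNIV)"
    by (rule measurable_compose[OF measurable_golf_H0]) simp
  then have events: "E y \<in> events" for y
    using measurable_sets[of "golf_H0 n" ?M _ "{H. y \<in> H}"] by (simp add: E_def vimage_def)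
  have integrable: "integrable ?M (indicator (E y) :: _ \<Rightarrow> real)" for y
    using events by (intro integrable_real_indicator) (simp_all add: emeasure_eq_measure)
  have "(\<Sum>y<n. prob (E y)) = (\<Sum>y<n. expectation (indicator (E y)))"
    using events by (simp add: emeasure_eq_measure)
  also have "\<dots> = expectation (\<lambda>\<omega>. \<Sum>y<n. indicator (E y) \<omega>)"
    by (rule Bochner_Integration.integral_sum[symmetric]) (rule integrable)
  also have "\<dots> = expectation (\<lambda>_. real Nh)"
  proof (rule integral_cong_AE)
    show "(\<lambda>\<omega>. \<Sum>y<n. indicator (E y) \<omega> :: real) \<in> borel_measurable ?M"
      by (intro borel_measurable_sum borel_measurable_integrable integrable)
    show "AE \<omega> in ?M. (\<Sum>y<n. indicator (E y) \<omega>) = real Nh"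
      using AE_golf_configs[OF ne] AE_space
    proof eventually_elim
      case (elim \<omega>)
      then have "(\<Sum>y<n. indicator (E y) \<omega> :: real) = card ({..<n} \<inter> golf_H0 n \<omega>)"
        by (simp add: E_def indicator_def sum.If_cases)
      also have "{..<n} \<inter> golf_H0 n \<omega> = golf_H0 n \<omega>"
        using golf_H0_subset by blast
      finally show ?case
        using elim by (simp add: golf_configs_def golf_H0_def)
    qed
  qed simp
  finally show ?thesis
    by (simp add: golf_prob_def E_def prob_space)
qed

theorem mainTheorem10:
  fixes n Nb x :: nat and p :: real
  assumes "1 \<le> n" and "2 * Nb + 1 \<le> n" and "0 \<le> p" and "p \<le> 1" and "x < n"
  shows "golf_prob n Nb (Nb + 1) p {\<omega>. golf_H1 n \<omega> = {x}} = 1 / real n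
    \<and> golf_cond_prob n Nb (Nb + 1) p {\<omega>. golf_H1 n \<omega> = {x}} {\<omega>. x \<in> golf_H0 n \<omega>}
        = 1 / real (Nb + 1)"
proof -
  note n = \<open>1 \<le> n\<close> and p = \<open>0 \<le> p\<close> \<open>p \<le> 1\<close>
  have ne: "golf_configs n Nb (Nb + 1) \<noteq> {}"
    using \<open>2 * Nb + 1 \<le> n\<close> by (intro golf_configs_nonempty) simp
  have H1: "golf_prob n Nb (Nb + 1) p {\<omega>. golf_H1 n \<omega> = {x}} = 1 / n"
    using rotation_invariant_eq_mean[where f="\<lambda>y. golf_prob n Nb (Nb + 1) p {\<omega>. golf_H1 n \<omega> = {y}}",
        OF n golf_prob_H1_singleton_rot[OF n p ne] \<open>x < n\<close>] sum_golf_prob_H1_singleton[OF n p ne]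
    by simp
  have H0: "golf_prob n Nb (Nb + 1) p {\<omega>. x \<in> golf_H0 n \<omega>} = (Nb + 1) / n"
    using rotation_invariant_eq_mean[where f="\<lambda>y. golf_prob n Nb (Nb + 1) p {\<omega>. y \<in> golf_H0 n \<omega>}",
        OF n golf_prob_mem_H0_rot[OF n ne] \<open>x < n\<close>] sum_golf_prob_mem_H0[OF ne]
    by simp
  have "{\<omega>. golf_H1 n \<omega> = {x}} \<inter> {\<omega>. x \<in> golf_H0 n \<omega>} = {\<omega>. golf_H1 n \<omega> = {x}}"
    using golf_H1_subset_H0 by blast
  then show ?thesis
    using H1 H0 n by (simp add: golf_cond_prob_def)
qed

end
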